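(* For all $m\ge 1$ and all $n\ge m$, $$d_1(W_{n,m},D)\ge \frac{2\big(|m-2|\log n-|(m+2)h_m-3|\big)}{n},$$ where $W_{n,m}=\frac1n C_{n,m}-1$, $C_{n,m}$ is the number of comparisons made by Quickselect to find the $m$-th smallest element of a list of $n$ distinct numbers, $D$ has the standard Dickman distribution, and $h_k=\sum_{j=1}^k 1/j$.
   Context: Quickselect (to find the $m$-th smallest element of a list of $n\ge m$ distinct numbers): a pivot is chosen uniformly at random from the list and compared with each of the other $n-1$ elements; the elements smaller than the pivot form the left sublist and those larger form the right sublist. If the left sublist has size $m-1$, the pivot is the answer and the procedure stops; if it has size $\ge m$, the procedure recurses on the left sublist to find its $m$-th smallest element; otherwise (left size $L<m-1$) it recurses on the right sublist to find its $(m-L-1)$-th smallest element. All pivot choices are independent. The standard Dickman distribution is the unique law of a non-negative random variable $D$ satisfying $D=_d U(D+1)$, where $U\sim\mathcal U[0,1]$ is independent of $D$. The Wasserstein distance is $d_1(X,Y)=\sup_{h\in \mathrm{Lip}_1}|Eh(X)-Eh(Y)|$, where $\mathrm{Lip}_1=\{h:|h(y)-h(x)|\le|y-x|\}$. *)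

theory Defs
  imports "HOL-Probability.Probability"
begin

text \<open>The pivot has rank k, uniform on {1..n}; the left
sublist has size L = k-1.  n-1 comparisons are made; if L = m-1 stop; if L \<ge> m recurse
on the left sublist (size k-1, same m); otherwise recurse on the right sublist
(size n-k, looking for the (m-L-1) = (m-k)-th smallest).  Degenerate arguments
(n = 0, or m outside 1..n) never arise from valid calls; they are mapped to 0.\<close>

function quickselect_cmp :: "nat \<Rightarrow> nat \<Rightarrow> nat pmf" where
  "quickselect_cmp n m =
     (if n = 0 \<or> m = 0 \<or> m > n then return_pmf 0
      else pmf_of_set {1..n} \<bind> (\<lambda>k.
        if k = m then return_pmf (n - 1)
        else if k > m then map_pmf (\<lambda>c. (n - 1) + c) (quickselect_cmp (k - 1) m)
        else map_pmf (\<lambda>c. (n - 1) + c) (quickselect_cmp (n - k) (m - k))))"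
  by pat_completeness auto
termination
  by (relation "Wellfounded.measure fst") (auto simp: set_pmf_of_set)

definition W_law :: "nat \<Rightarrow> nat \<Rightarrow> real measure" where
  "W_law n m = measure_pmf (map_pmf (\<lambda>c. real c / real n - 1) (quickselect_cmp n m))"

definition is_dickman :: "real measure \<Rightarrow> bool" where
  "is_dickman M \<longleftrightarrow> prob_space M \<and> sets M = sets borel \<and> (AE x in M. 0 \<le> x) \<and>
     M = distr (uniform_measure lborel {0..1} \<Otimes>\<^sub>M M) borel (\<lambda>(u, d). u * (d + 1))"

definition Lip1 :: "(real \<Rightarrow> real) set" where
  "Lip1 = {h. \<forall>x y. \<bar>h y - h x\<bar> \<le> \<bar>y - x\<bar>}"

definition wasserstein1 :: "real measure \<Rightarrow> real measure \<Rightarrow> ereal" where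
  "wasserstein1 P Q = (SUP h\<in>Lip1. ereal \<bar>(\<integral>x. h x \<partial>P) - (\<integral>x. h x \<partial>Q)\<bar>)"

end

theory Submission
  imports Defs
begin

text \<open>Testing against the 1-Lipschitz function \<open>h(x) = x\<close> bounds \<open>d\<^sub>1(W(n,m), D)\<close> from
below by \<open>\<bar>E W(n,m) - E D\<bar>\<close>. Taking expectations in \<open>D = U(D + 1)\<close> gives
\<open>E D = (E D + 1) / 2\<close>, hence \<open>E D = 1\<close> once \<open>E D < \<infinity>\<close> is known; finiteness follows from the
same identity for the truncations \<open>min(D, K)\<close>, whose means \<open>g(K)\<close> satisfy
\<open>g(K) \<le> (g(2K) + 1) / 2\<close> and \<open>g(K) = o(K)\<close>. The mean of \<open>C(n,m)\<close> is Knuth's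
\<open>2(n + 3 + (n+1) H(n) - (m+2) H(m) - (n+3-m) H(n+1-m))\<close>, verified against the recurrence
obtained by conditioning on the pivot. So the bound is \<open>\<bar>E C(n,m) / n - 2\<bar>\<close>, and
\<open>ln n \<le> H(n)\<close> turns it into the stated one.\<close>

section \<open>Expected number of comparisons\<close>

lemma finite_set_pmf_quickselect_cmp: "finite (set_pmf (quickselect_cmp n m))"
proof (induction n m rule: quickselect_cmp.induct)
  case (1 n m)
  then show ?case
    by (subst quickselect_cmp.simps) (auto simp: set_pmf_of_set intro!: finite_UN_I)
qed

declare quickselect_cmp.simps [simp del]

definition qs_mean :: "nat \<Rightarrow> nat \<Rightarrow> real" where
  "qs_mean n m = measure_pmf.expectation (quickselect_cmp n m) real"

lemma qs_mean_shift:
  "measure_pmf.expectation (map_pmf (\<lambda>c. a + c) (quickselect_cmp n m)) real = real a + qs_mean n m"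
proof -
  have "integrable (measure_pmf (quickselect_cmp n m)) real"
    by (rule integrable_measure_pmf_finite) (rule finite_set_pmf_quickselect_cmp)
  then show ?thesis
    by (simp add: qs_mean_def measure_pmf.prob_space)
qed

lemma sum_pivot_split:
  fixes c :: real
  assumes "1 \<le> m" "m \<le> n"
  shows "(\<Sum>k=1..n. if k = m then c else if k > m then c + f (k - 1) else c + g k)
           = real n * c + (\<Sum>j\<in>{m..<n}. f j) + (\<Sum>k\<in>{1..<m}. g k)"
proof -
  define h where "h k = (if k = m then 0 else if k > m then f (k - 1) else g k)" for k
  have "(\<Sum>k=1..n. if k = m then c else if k > m then c + f (k - 1) else c + g k)
          = (\<Sum>k\<in>{1..<Suc n}. c + h k)"
    by (intro sum.cong) (auto simp: h_def atLeastLessThanSuc_atLeastAtMost)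
  also have "\<dots> = real n * c + ((\<Sum>k\<in>{1..<m}. h k) + (\<Sum>k\<in>{m..<Suc n}. h k))"
    using assms by (simp add: sum.distrib sum.atLeastLessThan_concat)
  also have "(\<Sum>k\<in>{m..<Suc n}. h k) = h m + (\<Sum>k\<in>{Suc m..<Suc n}. h k)"
    using assms by (intro sum.atLeast_Suc_lessThan) auto
  also have "(\<Sum>k\<in>{Suc m..<Suc n}. h k) = (\<Sum>j\<in>{m..<n}. f j)"
    unfolding sum.shift_bounds_Suc_ivl by (intro sum.cong) (auto simp: h_def)
  also have "(\<Sum>k\<in>{1..<m}. h k) = (\<Sum>k\<in>{1..<m}. g k)"
    by (intro sum.cong) (auto simp: h_def)
  finally show ?thesis
    by (simp add: h_def algebra_simps)
qed

lemma qs_mean_rec: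
  assumes "1 \<le> m" "m \<le> n"
  shows "real n * qs_mean n m = real n * (real n - 1)
           + (\<Sum>j\<in>{m..<n}. qs_mean j m) + (\<Sum>k\<in>{1..<m}. qs_mean (n - k) (m - k))"
proof -
  let ?branch = "\<lambda>k. if k = m then return_pmf (n - 1)
        else if k > m then map_pmf (\<lambda>c. (n - 1) + c) (quickselect_cmp (k - 1) m)
        else map_pmf (\<lambda>c. (n - 1) + c) (quickselect_cmp (n - k) (m - k))"
  have "qs_mean n m = measure_pmf.expectation (pmf_of_set {1..n} \<bind> ?branch) real"
    unfolding qs_mean_def using assms by (subst quickselect_cmp.simps) simp
  also have "\<dots> = (\<Sum>k=1..n. measure_pmf.expectation (?branch k) real) / real n"
    using assms finite_set_pmf_quickselect_cmp
    by (subst pmf_expectation_bind_pmf_of_set) (auto simp: divide_inverse mult.commute sum_distrib_left)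
  also have "(\<Sum>k=1..n. measure_pmf.expectation (?branch k) real)
      = (\<Sum>k=1..n. if k = m then real n - 1 else if k > m then real n - 1 + qs_mean (k - 1) m
                   else real n - 1 + qs_mean (n - k) (m - k))"
    using assms by (intro sum.cong) (auto simp del: integral_map_pmf simp add: qs_mean_shift of_nat_diff)
  also have "\<dots> = real n * (real n - 1) + (\<Sum>j\<in>{m..<n}. qs_mean j m) + (\<Sum>k\<in>{1..<m}. qs_mean (n - k) (m - k))"
    by (rule sum_pivot_split[OF assms])
  moreover have "real n \<noteq> 0"
    using assms by simp
  ultimately show ?thesis
    by simp
qed

definition qs_mean_closed :: "nat \<Rightarrow> nat \<Rightarrow> real" where
  "qs_mean_closed n m = 2 * (real n + 3 + (real n + 1) * harm n - (real m + 2) * harm m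
                            - (real n + 3 - real m) * harm (n + 1 - m))"

lemma qs_mean_closed_diag: "qs_mean_closed n n = 2 * (real n - harm n)"
  by (simp add: qs_mean_closed_def harm_expand algebra_simps)

lemma sum_harm_atMost: "(\<Sum>j\<le>n. harm j) = (real n + 1) * harm n - real n"
proof (induction n)
  case (Suc n)
  have "(\<Sum>j\<le>Suc n. harm j) = (real n + 1) * harm n - real n + harm (Suc n)"
    using Suc.IH by simp
  then show ?case by (simp add: harm_Suc field_simps)
qed (simp add: harm_expand)

lemma sum_harm_top_segment:
  assumes "1 \<le> m" "m \<le> n + 1"
  shows "(\<Sum>k\<in>{1..<m}. harm (n + 1 - k) :: real) = (\<Sum>j\<le>n. harm j) - (\<Sum>j\<le>n + 1 - m. harm j)"
  using assms
proof (induction m rule: nat_induct_at_least)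
  case (Suc m)
  then have "n + 1 - m = Suc (n + 1 - Suc m)" by simp
  with Suc show ?case by simp
qed simp

lemma qs_mean_closed_rec_diag:
  "real m * qs_mean_closed m m = real m * (real m - 1) + (\<Sum>k\<in>{1..<m}. qs_mean_closed (m - k) (m - k))"
proof (cases m)
  case 0
  then show ?thesis by simp
next
  case (Suc p)
  have gauss: "(\<Sum>j\<le>p. real j) = real p * (real p + 1) / 2"
    by (induction p) (simp_all add: field_simps)
  have "(\<Sum>k\<in>{1..<m}. qs_mean_closed (m - k) (m - k)) = (\<Sum>j\<in>{1..<m}. qs_mean_closed j j)"
    by (rule sum.reindex_bij_witness[where i="\<lambda>j. m - j" and j="\<lambda>k. m - k"]) auto
  also have "\<dots> = (\<Sum>j\<le>p. 2 * (real j - harm j))"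
  proof -
    have "{..p} = insert 0 {1..<m}"
      using Suc by auto
    then show ?thesis
      by (simp add: qs_mean_closed_diag harm_expand)
  qed
  also have "\<dots> = 2 * ((\<Sum>j\<le>p. real j) - (\<Sum>j\<le>p. harm j))"
    by (simp add: sum_subtractf sum_distrib_left)
  finally have S: "(\<Sum>k\<in>{1..<m}. qs_mean_closed (m - k) (m - k))
      = 2 * (real p * (real p + 1) / 2 - ((real p + 1) * harm p - real p))"
    unfolding gauss sum_harm_atMost .
  show ?thesis
    unfolding S by (simp add: Suc qs_mean_closed_diag harm_Suc field_simps)
qed

lemma qs_mean_closed_Suc:
  assumes "m \<le> n + 1"
  shows "qs_mean_closed (Suc n) m - qs_mean_closed n m
           = 2 * (1 + harm (n + 1) - harm (n + 2 - m) - 1 / (real n + 2 - real m))"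
proof -
  define q where "q = n + 1 - m"
  have idx: "Suc n + 1 - m = Suc q" "n + 2 - m = Suc q" "n + 1 - m = q"
    using assms by (simp_all add: q_def)
  have r: "real n + 3 - real m = real q + 2" "real (Suc n) + 3 - real m = real q + 3"
    "real n + 2 - real m = real q + 1"
    using assms by (simp_all add: q_def of_nat_diff)
  have "qs_mean_closed (Suc n) m - qs_mean_closed n m
      = 2 * (1 + ((real n + 2) * harm (Suc n) - (real n + 1) * harm n)
               - ((real q + 3) * harm (Suc q) - (real q + 2) * harm q))"
    unfolding qs_mean_closed_def idx r by (simp add: algebra_simps)
  also have "(real n + 2) * harm (Suc n) - (real n + 1) * harm n = harm (Suc n) + 1"
    by (simp add: harm_Suc field_simps)
  also have "(real q + 3) * harm (Suc q) - (real q + 2) * harm q = harm (Suc q) + 1 + 1 / (real q + 1)"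
    by (simp add: harm_Suc field_simps)
  finally show ?thesis
    unfolding idx r by simp
qed

lemma qs_mean_closed_Suc_shifted:
  assumes "k < m" "m \<le> n"
  shows "qs_mean_closed (Suc n - k) (m - k) - qs_mean_closed (n - k) (m - k)
           = 2 * (1 + harm (n + 1 - k) - harm (n + 2 - m) - 1 / (real n + 2 - real m))"
proof -
  have "m - k \<le> n - k + 1"
    using assms by simp
  then have "qs_mean_closed (Suc (n - k)) (m - k) - qs_mean_closed (n - k) (m - k)
      = 2 * (1 + harm (n - k + 1) - harm (n - k + 2 - (m - k)) - 1 / (real (n - k) + 2 - real (m - k)))"
    by (rule qs_mean_closed_Suc)
  moreover have "Suc n - k = Suc (n - k)" "n - k + 1 = n + 1 - k" "n - k + 2 - (m - k) = n + 2 - m"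
    "real (n - k) + 2 - real (m - k) = real n + 2 - real m"
    using assms by (simp_all add: of_nat_diff)
  ultimately show ?thesis
    by (simp only:)
qed

lemma sum_qs_mean_closed_Suc_shifted:
  assumes "1 \<le> m" "m \<le> n"
  shows "(\<Sum>k\<in>{1..<m}. qs_mean_closed (Suc n - k) (m - k) - qs_mean_closed (n - k) (m - k))
           = (real m - 1) * (2 * (1 - harm (n + 2 - m) - 1 / (real n + 2 - real m)))
             + 2 * ((\<Sum>j\<le>n. harm j) - (\<Sum>j\<le>n + 1 - m. harm j))"
proof -
  have "(\<Sum>k\<in>{1..<m}. qs_mean_closed (Suc n - k) (m - k) - qs_mean_closed (n - k) (m - k))
      = (\<Sum>k\<in>{1..<m}. 2 * (1 - harm (n + 2 - m) - 1 / (real n + 2 - real m)) + 2 * harm (n + 1 - k))"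
  proof (rule sum.cong)
    fix k assume "k \<in> {1..<m}"
    then have "k < m"
      by simp
    show "qs_mean_closed (Suc n - k) (m - k) - qs_mean_closed (n - k) (m - k)
        = 2 * (1 - harm (n + 2 - m) - 1 / (real n + 2 - real m)) + 2 * harm (n + 1 - k)"
      unfolding qs_mean_closed_Suc_shifted[OF \<open>k < m\<close> assms(2)] by (simp add: algebra_simps)
  qed simp
  also have "\<dots> = (real m - 1) * (2 * (1 - harm (n + 2 - m) - 1 / (real n + 2 - real m)))
                   + 2 * ((\<Sum>j\<le>n. harm j) - (\<Sum>j\<le>n + 1 - m. harm j))"
    using assms sum_harm_top_segment[of m n] by (simp add: sum.distrib sum_distrib_left[symmetric] of_nat_diff)
  finally show ?thesis .
qed

lemma qs_mean_closed_step:
  assumes "1 \<le> m" "m \<le> n"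
  shows "(real n + 1) * (qs_mean_closed (Suc n) m - qs_mean_closed n m) = 2 * real n
           + (\<Sum>k\<in>{1..<m}. qs_mean_closed (Suc n - k) (m - k) - qs_mean_closed (n - k) (m - k))"
proof -
  define q where "q = n + 1 - m"
  have idx: "n + 2 - m = Suc q" "n + 1 - m = q"
    using assms by (simp_all add: q_def)
  have r: "real n + 2 - real m = real q + 1" "real m - 1 = real n - real q"
    using assms by (simp_all add: q_def of_nat_diff)
  have hn1: "harm (n + 1) = harm n + 1 / (real n + 1)" and hq1: "harm (Suc q) = harm q + 1 / (real q + 1)"
    by (simp_all add: harm_Suc inverse_eq_divide add.commute)
  have sum_diff: "(\<Sum>k\<in>{1..<m}. qs_mean_closed (Suc n - k) (m - k) - qs_mean_closed (n - k) (m - k))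
      = (real n - real q) * (2 * (1 - (harm q + 1 / (real q + 1)) - 1 / (real q + 1)))
        + 2 * (((real n + 1) * harm n - real n) - ((real q + 1) * harm q - real q))"
    using sum_qs_mean_closed_Suc_shifted[OF assms] unfolding idx r hq1 sum_harm_atMost .
  have diff: "qs_mean_closed (Suc n) m - qs_mean_closed n m
      = 2 * (1 + (harm n + 1 / (real n + 1)) - (harm q + 1 / (real q + 1)) - 1 / (real q + 1))"
    using qs_mean_closed_Suc[of m n] assms unfolding idx r hn1 hq1 by simp
  have key: "(x + 1) * (2 * (1 + (hx + 1 / (x + 1)) - (hy + 1 / (y + 1)) - 1 / (y + 1)))
      = 2 * x + ((x - y) * (2 * (1 - (hy + 1 / (y + 1)) - 1 / (y + 1)))
        + 2 * (((x + 1) * hx - x) - ((y + 1) * hy - y)))"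
    if "x + 1 > 0" "y + 1 > 0" for x y hx hy :: real
  proof -
    have "(x + 1) * (1 / (x + 1)) = 1" "(y + 1) * (1 / (y + 1)) = 1"
      using that by simp_all
    \<comment> \<open>an identity in the ideal generated by these two equations, the reciprocals being atoms\<close>
    then show ?thesis
      by algebra
  qed
  show ?thesis
    unfolding sum_diff diff by (rule key) simp_all
qed

lemma qs_mean_closed_rec:
  assumes "1 \<le> m" "m \<le> n"
  shows "real n * qs_mean_closed n m = real n * (real n - 1)
           + (\<Sum>j\<in>{m..<n}. qs_mean_closed j m) + (\<Sum>k\<in>{1..<m}. qs_mean_closed (n - k) (m - k))"
  using assms(2)
proof (induction n rule: dec_induct)
  case base
  then show ?case using qs_mean_closed_rec_diag[of m] by simp
next
  case (step n)
  have "(\<Sum>k\<in>{1..<m}. qs_mean_closed (Suc n - k) (m - k)) = (\<Sum>k\<in>{1..<m}. qs_mean_closed (n - k) (m - k))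
      + (\<Sum>k\<in>{1..<m}. qs_mean_closed (Suc n - k) (m - k) - qs_mean_closed (n - k) (m - k))"
    by (simp add: sum_subtractf)
  then show ?case
    using step qs_mean_closed_step[OF assms(1) step(1)] by (simp add: algebra_simps)
qed

lemma qs_mean_eq_closed: "1 \<le> m \<Longrightarrow> m \<le> n \<Longrightarrow> qs_mean n m = qs_mean_closed n m"
proof (induction n arbitrary: m rule: less_induct)
  case (less n)
  have "(\<Sum>j\<in>{m..<n}. qs_mean j m) = (\<Sum>j\<in>{m..<n}. qs_mean_closed j m)"
    using less.prems by (intro sum.cong) (auto intro: less.IH)
  moreover have "(\<Sum>k\<in>{1..<m}. qs_mean (n - k) (m - k)) = (\<Sum>k\<in>{1..<m}. qs_mean_closed (n - k) (m - k))"
    using less.prems by (intro sum.cong) (auto intro: less.IH)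
  ultimately have "real n * qs_mean n m = real n * qs_mean_closed n m"
    using qs_mean_rec[OF less.prems] qs_mean_closed_rec[OF less.prems] by (simp only:)
  then show ?case
    using less.prems by simp
qed

section \<open>The mean of the Dickman distribution\<close>

abbreviation uniform_01 :: "real measure" where
  "uniform_01 \<equiv> uniform_measure lborel {0..1}"

lemma nn_integral_uniform_01_scaled:
  assumes "0 \<le> c"
  shows "(\<integral>\<^sup>+u. ennreal (u * c) \<partial>uniform_01) = ennreal (c / 2)"
proof -
  have "((\<lambda>u. u * c) has_integral c / 2) {0..1::real}"
    using has_integral_mult_left[OF ident_has_integral[of 0 1], of c] by (simp add: power2_eq_square)
  then have "(\<integral>\<^sup>+u. ennreal (u * c) * indicator {0..1} u \<partial>lborel) = ennreal (c / 2)"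
    using assms by (intro nn_integral_has_integral_lebesgue') auto
  then show ?thesis
    by (subst nn_integral_uniform_measure) (auto simp: divide_ennreal_def)
qed

lemma nn_integral_uniform_01_truncated:
  assumes "0 \<le> d" "0 \<le> K"
  shows "(\<integral>\<^sup>+u. ennreal (min (max (u * (d + 1)) 0) K) \<partial>uniform_01) \<le> ennreal ((min d (2 * K) + 1) / 2)"
proof -
  interpret prob_space uniform_01
    by (rule prob_space_uniform_measure) auto
  have "(\<integral>\<^sup>+u. ennreal (min (max (u * (d + 1)) 0) K) \<partial>uniform_01) \<le> (\<integral>\<^sup>+u. ennreal (u * (d + 1)) \<partial>uniform_01)"
    using assms by (intro nn_integral_mono) (auto simp: ennreal_leI ennreal_eq_0_iff split: split_max)
  also have "\<dots> = ennreal ((d + 1) / 2)"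
    using assms by (intro nn_integral_uniform_01_scaled) auto
  finally have mean: "(\<integral>\<^sup>+u. ennreal (min (max (u * (d + 1)) 0) K) \<partial>uniform_01) \<le> ennreal ((d + 1) / 2)" .
  have "(\<integral>\<^sup>+u. ennreal (min (max (u * (d + 1)) 0) K) \<partial>uniform_01) \<le> (\<integral>\<^sup>+u. ennreal K \<partial>uniform_01)"
    by (intro nn_integral_mono ennreal_leI) auto
  then have cap: "(\<integral>\<^sup>+u. ennreal (min (max (u * (d + 1)) 0) K) \<partial>uniform_01) \<le> ennreal K"
    by (simp add: emeasure_space_1)
  show ?thesis
  proof (cases "d \<le> 2 * K")
    case True
    with mean show ?thesis by simp
  next
    case False
    then have "ennreal K \<le> ennreal ((min d (2 * K) + 1) / 2)"
      by (intro ennreal_leI) auto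
    with cap show ?thesis by (rule order_trans)
  qed
qed

lemma dickman_nn_integral:
  assumes D: "is_dickman M" and f: "f \<in> borel_measurable borel"
  shows "(\<integral>\<^sup>+x. f x \<partial>M) = (\<integral>\<^sup>+d. (\<integral>\<^sup>+u. f (u * (d + 1)) \<partial>uniform_01) \<partial>M)"
proof -
  have M: "prob_space M" "sets M = sets borel"
    and M_eq: "M = distr (uniform_01 \<Otimes>\<^sub>M M) borel (\<lambda>(u, d). u * (d + 1))"
    using D unfolding is_dickman_def by auto
  interpret pair_prob_space uniform_01 M
    using M(1) by (simp add: pair_prob_space_def pair_sigma_finite_def prob_space_imp_sigma_finite
        prob_space_uniform_measure)
  have g: "(\<lambda>(u, d). u * (d + 1)) \<in> measurable (uniform_01 \<Otimes>\<^sub>M M) (borel :: real measure)"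
  proof -
    have "sets (uniform_01 \<Otimes>\<^sub>M M) = sets (borel \<Otimes>\<^sub>M borel)"
      using M(2) by (intro sets_pair_measure_cong) auto
    then show ?thesis
      by (subst measurable_cong_sets[OF _ refl]) auto
  qed
  have "(\<integral>\<^sup>+x. f x \<partial>M) = (\<integral>\<^sup>+x. f x \<partial>distr (uniform_01 \<Otimes>\<^sub>M M) borel (\<lambda>(u, d). u * (d + 1)))"
    using M_eq by (rule arg_cong)
  also have "\<dots> = (\<integral>\<^sup>+z. f ((\<lambda>(u, d). u * (d + 1)) z) \<partial>(uniform_01 \<Otimes>\<^sub>M M))"
    using g f by (intro nn_integral_distr) auto
  also have "\<dots> = (\<integral>\<^sup>+d. (\<integral>\<^sup>+u. f (u * (d + 1)) \<partial>uniform_01) \<partial>M)"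
    using measurable_comp[OF g f] by (subst nn_integral_snd[symmetric]) (auto simp: comp_def)
  finally show ?thesis .
qed

lemma integrable_truncation:
  fixes K :: real
  assumes "finite_measure M" "sets M = sets borel"
  shows "integrable M (\<lambda>x. min (max x 0) K)"
  using assms by (intro finite_measure.integrable_const_bound[where B="\<bar>K\<bar>"])
    (auto simp: measurable_cong_sets[OF assms(2) refl])

lemma truncated_mean_sublinear:
  fixes K :: real
  assumes "finite_measure M" "sets M = sets borel" "0 < K"
  shows "(\<lambda>j. (\<integral>x. min (max x 0) (2 ^ j * K) \<partial>M) / (2 ^ j * K)) \<longlonglongrightarrow> 0"
proof -
  interpret finite_measure M by (rule assms(1))
  have "(\<lambda>j. \<integral>x. min (max x 0) (2 ^ j * K) / (2 ^ j * K) \<partial>M) \<longlonglongrightarrow> (\<integral>x. 0 \<partial>M)"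
  proof (rule integral_dominated_convergence[where w="\<lambda>x. 1"])
    show "AE x in M. (\<lambda>j. min (max x 0) (2 ^ j * K) / (2 ^ j * K)) \<longlonglongrightarrow> 0"
    proof (rule AE_I2, rule tendsto_sandwich[OF _ _ tendsto_const])
      fix x :: real
      show "\<forall>\<^sub>F j in sequentially. 0 \<le> min (max x 0) (2 ^ j * K) / (2 ^ j * K)"
        using assms by auto
      show "\<forall>\<^sub>F j in sequentially. min (max x 0) (2 ^ j * K) / (2 ^ j * K) \<le> max x 0 / K * inverse (2 ^ j)"
        using assms by (auto simp: field_simps intro!: divide_right_mono)
      show "(\<lambda>j. max x 0 / K * inverse (2 ^ j)) \<longlonglongrightarrow> (0::real)"
        using tendsto_mult[OF tendsto_const LIMSEQ_inverse_realpow_zero, of 2 "max x 0 / K"] by simp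
    qed
    show "AE x in M. norm (min (max x 0) (2 ^ j * K) / (2 ^ j * K)) \<le> 1" for j
      using assms by (auto simp: field_simps)
  qed (auto simp: measurable_cong_sets[OF assms(2) refl])
  then show ?thesis
    by simp
qed

lemma le_1_of_doubling:
  fixes g :: "real \<Rightarrow> real"
  assumes doubling: "\<And>L. 0 < L \<Longrightarrow> g L \<le> (g (2 * L) + 1) / 2"
    and sublinear: "(\<lambda>j. g (2 ^ j * K) / (2 ^ j * K)) \<longlonglongrightarrow> 0" and K: "0 < K"
  shows "g K \<le> 1"
proof -
  have iter: "2 ^ j * (g K - 1) \<le> g (2 ^ j * K) - 1" for j
  proof (induction j)
    case (Suc j)
    have "g (2 ^ j * K) \<le> (g (2 * (2 ^ j * K)) + 1) / 2"
      using K by (intro doubling) auto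
    with Suc show ?case by (simp add: algebra_simps)
  qed simp
  have "(\<lambda>j. g (2 ^ j * K) / (2 ^ j * K) - inverse K * inverse (2 ^ j)) \<longlonglongrightarrow> 0 - inverse K * 0"
    by (intro tendsto_intros sublinear LIMSEQ_inverse_realpow_zero) auto
  moreover have "(g K - 1) / K \<le> g (2 ^ j * K) / (2 ^ j * K) - inverse K * inverse (2 ^ j)" for j
  proof -
    have "(g K - 1) / K = 2 ^ j * (g K - 1) / (2 ^ j * K)" by simp
    also have "\<dots> \<le> (g (2 ^ j * K) - 1) / (2 ^ j * K)"
      using iter K by (intro divide_right_mono) auto
    finally show ?thesis
      by (simp add: diff_divide_distrib inverse_eq_divide mult.commute)
  qed
  ultimately have "(g K - 1) / K \<le> 0"
    by (intro LIMSEQ_le_const) auto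
  with K show ?thesis
    by (simp add: divide_le_0_iff)
qed

lemma dickman_truncated_mean_doubling:
  assumes D: "is_dickman M" and K: "0 \<le> K"
  shows "(\<integral>x. min (max x 0) K \<partial>M) \<le> ((\<integral>x. min (max x 0) (2 * K) \<partial>M) + 1) / 2"
proof -
  have M: "prob_space M" "sets M = sets borel" and M_nonneg: "AE x in M. 0 \<le> x"
    using D unfolding is_dickman_def by auto
  interpret prob_space M by (rule M(1))
  have int: "integrable M (\<lambda>x. min (max x 0) L)" for L :: real
    using finite_measure_axioms M(2) by (rule integrable_truncation)
  have "ennreal (\<integral>x. min (max x 0) K \<partial>M) = (\<integral>\<^sup>+x. ennreal (min (max x 0) K) \<partial>M)"
    using K by (intro nn_integral_eq_integral[symmetric] int) auto
  also have "\<dots> = (\<integral>\<^sup>+d. (\<integral>\<^sup>+u. ennreal (min (max (u * (d + 1)) 0) K) \<partial>uniform_01) \<partial>M)"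
    by (rule dickman_nn_integral[OF D]) auto
  also have "\<dots> \<le> (\<integral>\<^sup>+d. ennreal ((min (max d 0) (2 * K) + 1) / 2) \<partial>M)"
    using M_nonneg by (intro nn_integral_mono_AE) (auto elim!: eventually_mono intro: nn_integral_uniform_01_truncated[OF _ K, THEN order_trans])
  also have "\<dots> = ennreal (((\<integral>x. min (max x 0) (2 * K) \<partial>M) + 1) / 2)"
    using int[of "2 * K"] K by (subst nn_integral_eq_integral) (auto simp: prob_space)
  finally show ?thesis
    using K by (subst (asm) ennreal_le_iff) (auto intro!: add_nonneg_nonneg integral_nonneg_AE)
qed

lemma integrable_if_truncated_means_bounded:
  fixes B :: real
  assumes M: "finite_measure M" "sets M = sets borel" and nonneg: "AE x in M. 0 \<le> x"
    and bounded: "\<And>K. 0 < K \<Longrightarrow> (\<integral>x. min (max x 0) K \<partial>M) \<le> B"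
  shows "integrable M (\<lambda>x. x)"
proof -
  have int: "integrable M (\<lambda>x. min (max x 0) K)" for K :: real
    using M by (rule integrable_truncation)
  define g where "g K = (\<integral>x. min (max x 0) K \<partial>M)" for K
  have "incseq (\<lambda>i. g (real i))"
    unfolding incseq_def g_def by (auto intro!: integral_mono int)
  moreover have "g (real i) \<le> max B 0" for i
    using bounded[of "real i"] by (cases "i = 0") (auto simp: g_def)
  ultimately obtain L where L: "(\<lambda>i. g (real i)) \<longlonglongrightarrow> L"
    using incseq_convergent by blast
  have "integrable M (\<lambda>x. max x 0)"
  proof (rule integrable_monotone_convergence[where f="\<lambda>i x. min (max x 0) (real i)" and x=L])
    show "AE x in M. mono (\<lambda>i. min (max x 0) (real i))"
      by (auto simp: mono_def intro: min.mono)
    show "AE x in M. (\<lambda>i. min (max x 0) (real i)) \<longlonglongrightarrow> max x 0"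
    proof (rule AE_I2, rule tendsto_eventually)
      fix x :: real
      obtain N :: nat where "max x 0 \<le> real N"
        using real_arch_simple by blast
      then show "\<forall>\<^sub>F i in sequentially. min (max x 0) (real i) = max x 0"
        unfolding eventually_sequentially by (intro exI[of _ N]) auto
    qed
    show "(\<lambda>i. \<integral>x. min (max x 0) (real i) \<partial>M) \<longlonglongrightarrow> L"
      using L unfolding g_def .
  qed (auto intro: int simp: measurable_cong_sets[OF M(2) refl])
  then show ?thesis
    using nonneg
    by (subst integrable_cong_AE[where g="\<lambda>x. max x 0"]) (auto simp: measurable_cong_sets[OF M(2) refl])
qed

lemma dickman_integrable:
  assumes D: "is_dickman M"
  shows "integrable M (\<lambda>x. x)"
proof -
  have M: "prob_space M" "sets M = sets borel" and M_nonneg: "AE x in M. 0 \<le> x"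
    using D unfolding is_dickman_def by auto
  interpret prob_space M by (rule M(1))
  show ?thesis
  proof (rule integrable_if_truncated_means_bounded[OF finite_measure_axioms M(2) M_nonneg])
    fix K :: real assume K: "0 < K"
    show "(\<integral>x. min (max x 0) K \<partial>M) \<le> 1"
    proof (rule le_1_of_doubling[where g="\<lambda>K. \<integral>x. min (max x 0) K \<partial>M"])
      show "(\<integral>x. min (max x 0) L \<partial>M) \<le> ((\<integral>x. min (max x 0) (2 * L) \<partial>M) + 1) / 2" if "0 < L" for L
        using that by (intro dickman_truncated_mean_doubling[OF D]) simp
      show "(\<lambda>j. (\<integral>x. min (max x 0) (2 ^ j * K) \<partial>M) / (2 ^ j * K)) \<longlonglongrightarrow> 0"
        using finite_measure_axioms M(2) K by (rule truncated_mean_sublinear)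
    qed (rule K)
  qed
qed

lemma dickman_mean:
  assumes D: "is_dickman M"
  shows "(\<integral>x. x \<partial>M) = 1"
proof -
  have M: "prob_space M" and M_nonneg: "AE x in M. 0 \<le> x"
    using D unfolding is_dickman_def by auto
  interpret prob_space M by (rule M)
  have int: "integrable M (\<lambda>x. x)"
    using D by (rule dickman_integrable)
  define a where "a = (\<integral>x. x \<partial>M)"
  have "ennreal a = (\<integral>\<^sup>+x. ennreal x \<partial>M)"
    unfolding a_def using int M_nonneg by (intro nn_integral_eq_integral[symmetric])
  also have "\<dots> = (\<integral>\<^sup>+d. (\<integral>\<^sup>+u. ennreal (u * (d + 1)) \<partial>uniform_01) \<partial>M)"
    by (rule dickman_nn_integral[OF D]) auto
  also have "\<dots> = (\<integral>\<^sup>+d. ennreal ((d + 1) / 2) \<partial>M)"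
    using M_nonneg by (intro nn_integral_cong_AE) (auto elim!: eventually_mono intro: nn_integral_uniform_01_scaled)
  also have "\<dots> = ennreal ((a + 1) / 2)"
    using int M_nonneg unfolding a_def by (subst nn_integral_eq_integral) (auto simp: prob_space)
  finally have "a = (a + 1) / 2"
    using integral_nonneg_AE[OF M_nonneg] unfolding a_def by (subst (asm) ennreal_inj) auto
  then show ?thesis
    unfolding a_def by simp
qed

section \<open>The lower bound\<close>

lemma integral_W_law: "(\<integral>x. x \<partial>W_law n m) = qs_mean n m / real n - 1"
proof -
  have "integrable (measure_pmf (quickselect_cmp n m)) real"
    by (rule integrable_measure_pmf_finite) (rule finite_set_pmf_quickselect_cmp)
  then show ?thesis
    by (simp add: W_law_def qs_mean_def measure_pmf.prob_space)
qed

lemma wasserstein1_ge_mean_diff: "ereal \<bar>(\<integral>x. x \<partial>P) - (\<integral>x. x \<partial>Q)\<bar> \<le> wasserstein1 P Q"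
  unfolding wasserstein1_def by (rule SUP_upper2[where i="\<lambda>x. x"]) (auto simp: Lip1_def)

lemma ln_le_harm_combination:
  assumes "1 \<le> m" "m \<le> n"
  shows "\<bar>real m - 2\<bar> * ln (real n) \<le> \<bar>(real n + 1) * harm n - (real n + 3 - real m) * harm (n + 1 - m)\<bar>"
proof -
  have "ln (real n) \<le> ln (real n + 1)"
    using assms by simp
  also have "\<dots> \<le> harm n"
    by (rule ln_le_harm)
  finally have ln: "ln (real n) \<le> harm n" .
  consider "m = 1" | "m = 2" | "m \<ge> 3"
    using assms by linarith
  then show ?thesis
  proof cases
    case 1
    then show ?thesis
      using ln harm_nonneg[of n] by (simp add: algebra_simps)
  next
    case 3
    have "(real n + 1) * harm n - (real n + 3 - real m) * harm (n + 1 - m) - (real m - 2) * harm n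
        = (real n + 3 - real m) * (harm n - harm (n + 1 - m))"
      by (simp add: algebra_simps)
    also have "\<dots> \<ge> 0"
      using assms 3 by (intro mult_nonneg_nonneg) (auto simp: harm_mono)
    finally have "(real m - 2) * harm n \<le> (real n + 1) * harm n - (real n + 3 - real m) * harm (n + 1 - m)"
      by simp
    moreover have "(real m - 2) * ln (real n) \<le> (real m - 2) * harm n"
      using 3 ln by (intro mult_left_mono) auto
    ultimately have "(real m - 2) * ln (real n) \<le> (real n + 1) * harm n - (real n + 3 - real m) * harm (n + 1 - m)"
      by linarith
    with 3 show ?thesis
      by (auto simp: abs_if)
  qed simp
qed

lemma qs_mean_closed_deviation:
  assumes "1 \<le> m" "m \<le> n"
  shows "2 * (\<bar>real m - 2\<bar> * ln (real n) - \<bar>(real m + 2) * harm m - 3\<bar>) / real n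
           \<le> \<bar>qs_mean_closed n m / real n - 2\<bar>"
proof -
  define A where "A = (real n + 1) * harm n - (real n + 3 - real m) * harm (n + 1 - m)"
  define B where "B = (real m + 2) * harm m - 3"
  have n: "real n > 0"
    using assms by simp
  have "\<bar>real m - 2\<bar> * ln (real n) - \<bar>B\<bar> \<le> \<bar>A - B\<bar>"
    using ln_le_harm_combination[OF assms] unfolding A_def[symmetric] by linarith
  then have "2 * (\<bar>real m - 2\<bar> * ln (real n) - \<bar>B\<bar>) / real n \<le> 2 * \<bar>A - B\<bar> / real n"
    using n by (intro divide_right_mono) auto
  also have "\<dots> = \<bar>qs_mean_closed n m / real n - 2\<bar>"
  proof -
    have eq: "qs_mean_closed n m / real n - 2 = 2 * (A - B) / real n"
      using n unfolding qs_mean_closed_def A_def B_def by (simp add: field_simps)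
    show ?thesis
      unfolding eq abs_divide abs_mult using n by simp
  qed
  finally show ?thesis
    unfolding B_def .
qed

theorem theorem1p3:
  fixes n m :: nat and M :: "real measure"
  assumes "is_dickman M" and "1 \<le> m" and "m \<le> n"
  shows "wasserstein1 (W_law n m) M \<ge>
           ereal (2 * (\<bar>real m - 2\<bar> * ln (real n) - \<bar>(real m + 2) * harm m - 3\<bar>) / real n)"
proof -
  have "ereal (2 * (\<bar>real m - 2\<bar> * ln (real n) - \<bar>(real m + 2) * harm m - 3\<bar>) / real n)
      \<le> ereal \<bar>qs_mean_closed n m / real n - 2\<bar>"
    using qs_mean_closed_deviation[OF assms(2,3)] by simp
  also have "qs_mean_closed n m / real n - 2 = (\<integral>x. x \<partial>W_law n m) - (\<integral>x. x \<partial>M)"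
    using assms by (simp add: integral_W_law qs_mean_eq_closed dickman_mean)
  also have "ereal \<bar>\<dots>\<bar> \<le> wasserstein1 (W_law n m) M"
    by (rule wasserstein1_ge_mean_diff)
  finally show ?thesis .
qed

end
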